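(* A choice function $C$ is consistent if and only if the assessment $\mathcal{A}_C$ is consistent.
   Context: Let $\mathcal{X}$ be a nonempty set and let $\mathscr{V}$ be the real vector space of all functions $u:\mathcal{X}\to\mathbb{R}$ (options), with pointwise operations. For $u,v\in\mathscr{V}$, $u\le v$ iff $u(x)\le v(x)$ for all $x\in\mathcal{X}$, and $u<v$ iff $u\le v$ and $u\neq v$. Let $\mathscr{V}_{>0}=\{u\in\mathscr{V}:0<u\}$ and $\mathscr{V}^s_{>0}=\{\{u\}:u\in\mathscr{V}_{>0}\}$. Let $\mathscr{Q}$ be the set of all finite subsets of $\mathscr{V}$ (including $\emptyset$). For $A\in\mathscr{Q}$ and $u\in\mathscr{V}$, $A-u=\{v-u:v\in A\}$. For a positive integer $n$, $\mathbb{R}^{n,+}=\{\boldsymbol\lambda\in\mathbb{R}^n:\lambda_j\ge0\ \forall j,\ \sum_j\lambda_j>0\}$, and for $\boldsymbol\lambda\in\mathbb{R}^n$, $\mathbf u=(u_1,\dots,u_n)\in\mathscr{V}^n$, $\boldsymbol\lambda\mathbf u=\sum_{j=1}^n\lambda_ju_j$. A choice function is a map $C:\mathscr{Q}\to\mathscr{Q}$ with $C(A)\subseteq A$ for all $A$; its rejection function is $R_C(A)=A\setminus C(A)$, and $K_C=\{A\in\mathscr{Q}:0\notin C(A\cup\{0\})\}$. $C$ is coherent if: (C0) $C(A)\neq\emptyset$ for all nonempty $A\in\mathscr{Q}$; (C1) for all $A\in\mathscr{Q}$ and $u\in A$: $u\in C(A)\iff 0\in C(A-u)$; (C2) $\{u\}\in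 K_C$ for all $u\in\mathscr{V}_{>0}$; (C3) for all $A,B\in K_C$ and all maps $\boldsymbol\lambda:A\times B\to\mathbb{R}^{2,+}$, $\{\boldsymbol\lambda(\mathbf u)\mathbf u:\mathbf u\in A\times B\}\in K_C$; (C4) $A\subseteq B\Rightarrow R_C(A)\subseteq R_C(B)$ for all $A,B\in\mathscr{Q}$. $\mathcal{C}$ denotes the set of coherent choice functions. For a choice function $C$, $\mathcal C_C=\{C'\in\mathcal C: C'(A)\subseteq C(A)\text{ for all }A\in\mathscr{Q}\}$ and $C$ is called consistent if $\mathcal C_C\neq\emptyset$. A set of desirable option sets is any $K\subseteq\mathscr{Q}$. It is coherent if for all $A,B\in K$: (K0) $A\setminus\{0\}\in K$; (K1) $\{0\}\notin K$; (K2) $\mathscr{V}^s_{>0}\subseteq K$; (K3) $\{\boldsymbol\lambda(\mathbf u)\mathbf u:\mathbf u\in A\times B\}\in K$ for every map $\boldsymbol\lambda:A\times B\to\mathbb{R}^{2,+}$; (K4) $A\cup Q\in K$ for all $Q\in\mathscr{Q}$. $\bar{\mathbf K}$ denotes the set of coherent sets of desirable option sets. An assessment is any subset $\mathcal{A}\subseteq\mathscr{Q}$; $\bar{\mathbf K}(\mathcal A)=\{K\in\bar{\mathbf K}:\mathcal A\subseteq K\}$, and $\mathcal A$ is called consistent if $\bar{\mathbf K}(\mathcal A)\neq\emptyset$. For a choice function $C$, $\mathcal A_C=\{C(A)-u:A\in\mathscr{Q},\ u\in R_C(A)\}$. *)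

theory Defs
  imports Complex_Main
begin

text \<open>Options are real-valued functions on a (nonempty) type 'x; option sets
  (elements of Q) are finite sets of options.\<close>

type_synonym 'x opt = "'x \<Rightarrow> real"

definition zero_opt :: "'x opt" where
  "zero_opt = (\<lambda>_. 0)"

definition pos_opt :: "'x opt \<Rightarrow> bool" where
  "pos_opt u \<longleftrightarrow> (\<forall>x. 0 \<le> u x) \<and> u \<noteq> zero_opt"

definition shift :: "'x opt set \<Rightarrow> 'x opt \<Rightarrow> 'x opt set" where
  "shift A u = (\<lambda>v. (\<lambda>x. v x - u x)) ` A"

definition pos_weight :: "real \<times> real \<Rightarrow> bool" where
  "pos_weight l \<longleftrightarrow> fst l \<ge> 0 \<and> snd l \<ge> 0 \<and> fst l + snd l > 0"

definition posi_comb :: "('x opt \<times> 'x opt \<Rightarrow> real \<times> real) \<Rightarrow> 'x opt set \<Rightarrow> 'x opt set \<Rightarrow> 'x opt set" where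
  "posi_comb l A B = (\<lambda>(u, v). (\<lambda>x. fst (l (u, v)) * u x + snd (l (u, v)) * v x)) ` (A \<times> B)"

definition choice_function :: "('x opt set \<Rightarrow> 'x opt set) \<Rightarrow> bool" where
  "choice_function C \<longleftrightarrow> (\<forall>A. finite A \<longrightarrow> C A \<subseteq> A)"

definition rej :: "('x opt set \<Rightarrow> 'x opt set) \<Rightarrow> 'x opt set \<Rightarrow> 'x opt set" where
  "rej C A = A - C A"

definition K_of :: "('x opt set \<Rightarrow> 'x opt set) \<Rightarrow> 'x opt set set" where
  "K_of C = {A. finite A \<and> zero_opt \<notin> C (insert zero_opt A)}"

definition coherent_cf :: "('x opt set \<Rightarrow> 'x opt set) \<Rightarrow> bool" where
  "coherent_cf C \<longleftrightarrow>
     choice_function C \<and>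
     (\<forall>A. finite A \<and> A \<noteq> {} \<longrightarrow> C A \<noteq> {}) \<and>
     (\<forall>A u. finite A \<and> u \<in> A \<longrightarrow> (u \<in> C A \<longleftrightarrow> zero_opt \<in> C (shift A u))) \<and>
     (\<forall>u. pos_opt u \<longrightarrow> {u} \<in> K_of C) \<and>
     (\<forall>A\<in>K_of C. \<forall>B\<in>K_of C. \<forall>l. (\<forall>p\<in>A \<times> B. pos_weight (l p)) \<longrightarrow>
         posi_comb l A B \<in> K_of C) \<and>
     (\<forall>A B. finite A \<and> finite B \<and> A \<subseteq> B \<longrightarrow> rej C A \<subseteq> rej C B)"

definition consistent_cf :: "('x opt set \<Rightarrow> 'x opt set) \<Rightarrow> bool" where
  "consistent_cf C \<longleftrightarrow>
     (\<exists>C'. coherent_cf C' \<and> (\<forall>A. finite A \<longrightarrow> C' A \<subseteq> C A))"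

definition coherent_K :: "'x opt set set \<Rightarrow> bool" where
  "coherent_K K \<longleftrightarrow>
     (\<forall>A\<in>K. finite A) \<and>
     (\<forall>A\<in>K. A - {zero_opt} \<in> K) \<and>
     {zero_opt} \<notin> K \<and>
     (\<forall>u. pos_opt u \<longrightarrow> {u} \<in> K) \<and>
     (\<forall>A\<in>K. \<forall>B\<in>K. \<forall>l. (\<forall>p\<in>A \<times> B. pos_weight (l p)) \<longrightarrow> posi_comb l A B \<in> K) \<and>
     (\<forall>A\<in>K. \<forall>Q. finite Q \<longrightarrow> A \<union> Q \<in> K)"

definition consistent_assessment :: "'x opt set set \<Rightarrow> bool" where
  "consistent_assessment \<A> \<longleftrightarrow> (\<exists>K. coherent_K K \<and> \<A> \<subseteq> K)"

definition assessment_of :: "('x opt set \<Rightarrow> 'x opt set) \<Rightarrow> 'x opt set set" where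
  "assessment_of C = {shift (C A) u | A u. finite A \<and> u \<in> rej C A}"

end

theory Submission
  imports Defs
begin

text \<open>If \<open>C'\<close> is coherent and below \<open>C\<close>, then \<open>K\<^sub>C\<^sub>'\<close> is a coherent set of desirable
  option sets, and for every \<open>u\<close> rejected from \<open>A\<close> by \<open>C\<close> it contains \<open>A - u\<close> and, by
  (C1), \<open>A - w\<close> for every \<open>w\<close> rejected by \<open>C'\<close>. Combining these with (K3) eliminates
  the options rejected by \<open>C'\<close> one at a time, so \<open>C'(A) - u \<in> K\<^sub>C\<^sub>'\<close>, and by (K4) also
  \<open>C(A) - u \<in> K\<^sub>C\<^sub>'\<close>. Conversely a coherent \<open>K \<supseteq> \<A>\<^sub>C\<close> induces the choice function
  \<open>C'(A) = {u \<in> A. A - u \<notin> K}\<close>, which is coherent with \<open>K\<^sub>C\<^sub>' = K\<close> and lies below \<open>C\<close>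
  because \<open>C(A) - u \<in> K\<close> for every rejected \<open>u\<close>.\<close>

lemma zero_opt_in_shift: "u \<in> A \<Longrightarrow> zero_opt \<in> shift A u"
  unfolding shift_def zero_opt_def by (rule image_eqI[of _ _ u]) auto

lemma shift_zero_opt [simp]: "shift A zero_opt = A"
  by (simp add: shift_def zero_opt_def)

lemma shift_empty [simp]: "shift {} u = {}"
  by (simp add: shift_def)

lemma shift_Diff_singleton: "shift (A - {u}) u = shift A u - {zero_opt}"
  by (auto simp: shift_def zero_opt_def fun_eq_iff)

lemma shift_mono: "A \<subseteq> B \<Longrightarrow> shift A u \<subseteq> shift B u"
  by (auto simp: shift_def)

lemma finite_shift: "finite A \<Longrightarrow> finite (shift A u)"
  by (simp add: shift_def)

lemma coherent_K_finite: "coherent_K K \<Longrightarrow> A \<in> K \<Longrightarrow> finite A"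
  by (simp add: coherent_K_def)

lemma coherent_K_Diff_zero: "coherent_K K \<Longrightarrow> A \<in> K \<Longrightarrow> A - {zero_opt} \<in> K"
  by (simp add: coherent_K_def)

lemma coherent_K_posi_comb:
  "coherent_K K \<Longrightarrow> A \<in> K \<Longrightarrow> B \<in> K \<Longrightarrow> \<forall>p\<in>A \<times> B. pos_weight (l p) \<Longrightarrow> posi_comb l A B \<in> K"
  by (simp add: coherent_K_def)

lemma coherent_K_superset:
  assumes "coherent_K K" "A \<in> K" "A \<subseteq> B" "finite B"
  shows "B \<in> K"
proof -
  have "A \<union> B \<in> K" using assms unfolding coherent_K_def by blast
  moreover have "A \<union> B = B" using assms(3) by blast
  ultimately show ?thesis by simp
qed

lemma coherent_K_empty_notin:
  assumes "coherent_K K" shows "{} \<notin> K"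
  using coherent_K_superset[OF assms, of "{}" "{zero_opt}"] assms by (auto simp: coherent_K_def)

text \<open>Weight \<open>(1, 1)\<close> on the pair \<open>(r - w, v - r)\<close> yields \<open>v - w\<close>, weight \<open>(1, 0)\<close> keeps
  every other element of \<open>A - w\<close>; this removes \<open>r - w\<close> from \<open>A - w\<close>.\<close>

lemma coherent_K_shift_Diff_singleton:
  assumes K: "coherent_K K" and r: "r \<in> A" and "w \<noteq> r"
    and Kw: "shift A w \<in> K" and Kr: "shift A r \<in> K"
  shows "shift (A - {r}) w \<in> K"
proof -
  let ?Y = "shift A r - {zero_opt}"
  let ?rw = "\<lambda>t. r t - w t"
  define l where "l = (\<lambda>p :: 'a opt \<times> 'a opt. if fst p = ?rw then (1::real, 1::real) else (1, 0))"
  have Y: "?Y \<in> K" using coherent_K_Diff_zero[OF K Kr] .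
  then obtain y0 where y0: "y0 \<in> ?Y" using coherent_K_empty_notin[OF K] by (metis all_not_in_conv)
  have "posi_comb l (shift A w) ?Y \<in> K"
    by (rule coherent_K_posi_comb[OF K Kw Y]) (simp add: l_def pos_weight_def)
  moreover have "posi_comb l (shift A w) ?Y = shift (A - {r}) w"
  proof
    show "posi_comb l (shift A w) ?Y \<subseteq> shift (A - {r}) w"
    proof
      fix z assume "z \<in> posi_comb l (shift A w) ?Y"
      then obtain x y where "x \<in> shift A w" "y \<in> ?Y"
        and z: "z = (\<lambda>t. fst (l (x, y)) * x t + snd (l (x, y)) * y t)"
        by (auto simp: posi_comb_def)
      then obtain v v' where v: "v \<in> A" "x = (\<lambda>t. v t - w t)"
        and v': "v' \<in> A" "y = (\<lambda>t. v' t - r t)" and "y \<noteq> zero_opt"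
        by (auto simp: shift_def)
      show "z \<in> shift (A - {r}) w"
      proof (cases "x = ?rw")
        case True
        have "v' \<noteq> r" using \<open>y \<noteq> zero_opt\<close> v' by (auto simp: zero_opt_def)
        moreover have "z = (\<lambda>t. v' t - w t)" using True z v' by (simp add: l_def)
        ultimately show ?thesis using v' by (auto simp: shift_def)
      next
        case False
        then have "v \<noteq> r" using v by auto
        moreover have "z = x" using False z by (simp add: l_def)
        ultimately show ?thesis using v by (auto simp: shift_def)
      qed
    qed
  next
    show "shift (A - {r}) w \<subseteq> posi_comb l (shift A w) ?Y"
    proof
      fix z assume "z \<in> shift (A - {r}) w"
      then obtain v where v: "v \<in> A" "v \<noteq> r" and z: "z = (\<lambda>t. v t - w t)"
        by (auto simp: shift_def)
      have "z \<noteq> ?rw" using v z by (auto simp: fun_eq_iff)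
      then have "z = (\<lambda>t. fst (l (z, y0)) * z t + snd (l (z, y0)) * y0 t)"
        by (simp add: l_def)
      moreover have "z \<in> shift A w" using v z by (auto simp: shift_def)
      ultimately show "z \<in> posi_comb l (shift A w) ?Y"
        unfolding posi_comb_def using y0 by (auto intro!: image_eqI[of _ _ "(z, y0)"])
    qed
  qed
  ultimately show ?thesis by simp
qed

lemma coherent_K_shift_Diff_insert:
  assumes K: "coherent_K K" and "finite F"
  shows "finite A \<Longrightarrow> u \<in> A \<Longrightarrow> F \<subseteq> A \<Longrightarrow> u \<notin> F \<Longrightarrow> shift A u \<in> K
     \<Longrightarrow> \<forall>w\<in>F. shift A w \<in> K \<Longrightarrow> shift (A - insert u F) u \<in> K"
  using \<open>finite F\<close>
proof (induction F arbitrary: A rule: finite_induct)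
  case empty
  then show ?case using coherent_K_Diff_zero[OF K] by (simp add: shift_Diff_singleton)
next
  case (insert r F)
  have r: "r \<in> A" using insert.prems by simp
  have "shift (A - {r}) w \<in> K" if "w \<in> insert u F" for w
    using coherent_K_shift_Diff_singleton[OF K r] insert that by (metis insertE insert_iff)
  with insert have "shift (A - {r} - insert u F) u \<in> K"
    by (intro insert.IH) blast+
  moreover have "A - {r} - insert u F = A - insert u (insert r F)" by auto
  ultimately show ?case by simp
qed

lemma coherent_K_shift_Diff:
  assumes K: "coherent_K K" and "finite A" "R \<subseteq> A" "u \<in> R"
    and "\<forall>w\<in>R. shift A w \<in> K"
  shows "shift (A - R) u \<in> K"
proof -
  have "shift (A - insert u (R - {u})) u \<in> K"
    using assms by (intro coherent_K_shift_Diff_insert[OF K]) (auto intro: finite_subset)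
  moreover have "insert u (R - {u}) = R" using \<open>u \<in> R\<close> by auto
  ultimately show ?thesis by simp
qed

lemma coherent_cf_choice_function: "coherent_cf C \<Longrightarrow> choice_function C"
  by (simp add: coherent_cf_def)

lemma coherent_cf_mem_iff_zero_opt_mem:
  "coherent_cf C \<Longrightarrow> finite A \<Longrightarrow> u \<in> A \<Longrightarrow> u \<in> C A \<longleftrightarrow> zero_opt \<in> C (shift A u)"
  by (simp add: coherent_cf_def)

lemma coherent_K_K_of:
  assumes "coherent_cf C"
  shows "coherent_K (K_of C)"
  unfolding coherent_K_def
proof (intro conjI)
  have C0: "\<forall>A. finite A \<and> A \<noteq> {} \<longrightarrow> C A \<noteq> {}"
    and C4: "\<forall>A B. finite A \<and> finite B \<and> A \<subseteq> B \<longrightarrow> rej C A \<subseteq> rej C B"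
    using assms unfolding coherent_cf_def by simp_all
  show "\<forall>A\<in>K_of C. finite A" "\<forall>A\<in>K_of C. A - {zero_opt} \<in> K_of C"
    by (auto simp: K_of_def)
  have "C {zero_opt} \<noteq> {}" "C {zero_opt} \<subseteq> {zero_opt}"
    using C0 coherent_cf_choice_function[OF assms] unfolding choice_function_def by auto
  then have "C {zero_opt} = {zero_opt}" by blast
  then show "{zero_opt} \<notin> K_of C" by (simp add: K_of_def)
  show "\<forall>u. pos_opt u \<longrightarrow> {u} \<in> K_of C"
    "\<forall>A\<in>K_of C. \<forall>B\<in>K_of C. \<forall>l. (\<forall>p\<in>A \<times> B. pos_weight (l p)) \<longrightarrow> posi_comb l A B \<in> K_of C"
    using assms unfolding coherent_cf_def by simp_all
  show "\<forall>A\<in>K_of C. \<forall>Q. finite Q \<longrightarrow> A \<union> Q \<in> K_of C"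
  proof (intro ballI allI impI)
    fix A Q :: "'a opt set" assume A: "A \<in> K_of C" and "finite Q"
    then have "zero_opt \<in> rej C (insert zero_opt A)"
      by (simp add: K_of_def rej_def)
    also have "\<dots> \<subseteq> rej C (insert zero_opt (A \<union> Q))"
      using C4[rule_format, of "insert zero_opt A" "insert zero_opt (A \<union> Q)"] A \<open>finite Q\<close>
      by (auto simp: K_of_def)
    finally show "A \<union> Q \<in> K_of C"
      using A \<open>finite Q\<close> by (simp add: K_of_def rej_def)
  qed
qed

lemma shift_rejected_in_K_of:
  assumes "coherent_cf C" "finite A" "w \<in> A" "w \<notin> C A"
  shows "shift A w \<in> K_of C"
proof -
  have "zero_opt \<notin> C (shift A w)"
    using assms coherent_cf_mem_iff_zero_opt_mem by blast
  moreover have "insert zero_opt (shift A w) = shift A w"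
    using zero_opt_in_shift[OF \<open>w \<in> A\<close>] by auto
  ultimately show ?thesis using finite_shift[OF \<open>finite A\<close>] by (simp add: K_of_def)
qed

lemma shift_choice_in_K_of:
  assumes coh: "coherent_cf C" and "finite A" "u \<in> A" "u \<notin> C A"
  shows "shift (C A) u \<in> K_of C"
proof -
  have "shift (A - (A - C A)) u \<in> K_of C"
    using assms shift_rejected_in_K_of[OF coh]
    by (intro coherent_K_shift_Diff[OF coherent_K_K_of[OF coh]]) auto
  moreover have "A - (A - C A) = C A"
    using coherent_cf_choice_function[OF coh] \<open>finite A\<close> unfolding choice_function_def by auto
  ultimately show ?thesis by simp
qed

lemma consistent_assessment_if_consistent_cf:
  assumes C: "choice_function C" and "consistent_cf C"
  shows "consistent_assessment (assessment_of C)"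
proof -
  obtain C' where coh: "coherent_cf C'" and below: "\<forall>A. finite A \<longrightarrow> C' A \<subseteq> C A"
    using assms(2) unfolding consistent_cf_def by blast
  have "shift (C A) u \<in> K_of C'" if "finite A" "u \<in> rej C A" for A u
  proof (rule coherent_K_superset[OF coherent_K_K_of[OF coh]])
    show "shift (C' A) u \<in> K_of C'"
      using that below by (intro shift_choice_in_K_of[OF coh]) (auto simp: rej_def)
    show "shift (C' A) u \<subseteq> shift (C A) u" using that below shift_mono by blast
    show "finite (shift (C A) u)"
      using C that unfolding choice_function_def by (meson finite_subset finite_shift)
  qed
  then have "assessment_of C \<subseteq> K_of C'" by (auto simp: assessment_of_def)
  then show ?thesis
    using coherent_K_K_of[OF coh] unfolding consistent_assessment_def by blast
qed

definition choice_of_K :: "'x opt set set \<Rightarrow> 'x opt set \<Rightarrow> 'x opt set" where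
  "choice_of_K K A = {u \<in> A. shift A u \<notin> K}"

lemma K_of_choice_of_K:
  assumes K: "coherent_K K"
  shows "K_of (choice_of_K K) = K"
proof
  show "K_of (choice_of_K K) \<subseteq> K"
  proof
    fix A assume "A \<in> K_of (choice_of_K K)"
    then have "finite A" "insert zero_opt A \<in> K"
      by (auto simp: K_of_def choice_of_K_def)
    then have "insert zero_opt A - {zero_opt} \<in> K" using coherent_K_Diff_zero[OF K] by blast
    then show "A \<in> K" using coherent_K_superset[OF K] \<open>finite A\<close> by blast
  qed
  show "K \<subseteq> K_of (choice_of_K K)"
  proof
    fix A assume "A \<in> K"
    moreover have "finite (insert zero_opt A)" using coherent_K_finite[OF K \<open>A \<in> K\<close>] by simp
    ultimately have "insert zero_opt A \<in> K" using coherent_K_superset[OF K] by blast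
    then show "A \<in> K_of (choice_of_K K)"
      using coherent_K_finite[OF K \<open>A \<in> K\<close>] by (simp add: K_of_def choice_of_K_def)
  qed
qed

lemma coherent_cf_choice_of_K:
  assumes K: "coherent_K K"
  shows "coherent_cf (choice_of_K K)"
  unfolding coherent_cf_def K_of_choice_of_K[OF K]
proof (intro conjI)
  show "choice_function (choice_of_K K)"
    by (auto simp: choice_function_def choice_of_K_def)
  show "\<forall>A. finite A \<and> A \<noteq> {} \<longrightarrow> choice_of_K K A \<noteq> {}"
  proof (intro allI impI notI)
    fix A assume A: "finite A \<and> A \<noteq> {}" and "choice_of_K K A = {}"
    then obtain u where "u \<in> A" "\<forall>w\<in>A. shift A w \<in> K"
      by (auto simp: choice_of_K_def)
    then have "shift (A - A) u \<in> K" using A by (intro coherent_K_shift_Diff[OF K]) auto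
    then show False using coherent_K_empty_notin[OF K] by simp
  qed
  show "\<forall>A u. finite A \<and> u \<in> A \<longrightarrow> (u \<in> choice_of_K K A \<longleftrightarrow> zero_opt \<in> choice_of_K K (shift A u))"
    by (auto simp: choice_of_K_def zero_opt_in_shift)
  show "\<forall>u. pos_opt u \<longrightarrow> {u} \<in> K"
    "\<forall>A\<in>K. \<forall>B\<in>K. \<forall>l. (\<forall>p\<in>A \<times> B. pos_weight (l p)) \<longrightarrow> posi_comb l A B \<in> K"
    using K unfolding coherent_K_def by simp_all
  show "\<forall>A B. finite A \<and> finite B \<and> A \<subseteq> B \<longrightarrow> rej (choice_of_K K) A \<subseteq> rej (choice_of_K K) B"
  proof (intro allI impI subsetI)
    fix A B u assume AB: "finite A \<and> finite B \<and> A \<subseteq> B" and "u \<in> rej (choice_of_K K) A"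
    then have "u \<in> B" "shift A u \<in> K" by (auto simp: rej_def choice_of_K_def)
    moreover have "shift A u \<subseteq> shift B u" using AB shift_mono by blast
    ultimately have "shift B u \<in> K"
      using coherent_K_superset[OF K] finite_shift AB by blast
    then show "u \<in> rej (choice_of_K K) B" using \<open>u \<in> B\<close> by (simp add: rej_def choice_of_K_def)
  qed
qed

lemma choice_of_K_subset:
  assumes K: "coherent_K K" and C: "choice_function C" and "assessment_of C \<subseteq> K"
    and A: "finite A"
  shows "choice_of_K K A \<subseteq> C A"
proof
  fix u assume u: "u \<in> choice_of_K K A"
  show "u \<in> C A"
  proof (rule ccontr)
    assume "u \<notin> C A"
    then have "shift (C A) u \<in> K"
      using u A assms(3) by (auto simp: assessment_of_def rej_def choice_of_K_def)
    moreover have "shift (C A) u \<subseteq> shift A u"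
      using C A shift_mono unfolding choice_function_def by blast
    ultimately have "shift A u \<in> K" using coherent_K_superset[OF K] finite_shift[OF A] by blast
    then show False using u by (simp add: choice_of_K_def)
  qed
qed

theorem mainTheorem17:
  fixes C :: "'x opt set \<Rightarrow> 'x opt set"
  assumes "choice_function C"
  shows "consistent_cf C \<longleftrightarrow> consistent_assessment (assessment_of C)"
proof
  show "consistent_cf C \<Longrightarrow> consistent_assessment (assessment_of C)"
    using consistent_assessment_if_consistent_cf[OF assms] .
next
  assume "consistent_assessment (assessment_of C)"
  then obtain K where K: "coherent_K K" and "assessment_of C \<subseteq> K"
    unfolding consistent_assessment_def by blast
  then have "\<forall>A. finite A \<longrightarrow> choice_of_K K A \<subseteq> C A"
    using choice_of_K_subset[OF K assms] by blast
  then show "consistent_cf C"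
    using coherent_cf_choice_of_K[OF K] unfolding consistent_cf_def by blast
qed

end
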